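(* Let $k\in\mathbb{R}$, $a_1>0$, $c>0$ and $\gamma\ge 1$ be fixed, with $k\neq 0$ and $c^2\neq k^2a_1^2$, and let $c(k)$ denote a fixed (possibly complex) square root of $c^2-k^2a_1^2$ (so $c(k)\neq 0$). For $Pr>0$ consider the complex polynomial $$P(X)= X^{3} + 2\,i\,k\,a_1 \left( 1+\frac{3\,\gamma}{4\,Pr} \right)X^{2} - \left(c^{2} + \frac{3\,\gamma}{Pr}a_1^2\,k^2\right)X - i\,\frac{3\,k\,a_1\,c^2}{2\,Pr}.$$ Then, as $Pr\to\infty$ (all other parameters fixed), the three roots $X^{(-)}_{Pr},X^{(0)}_{Pr},X^{(+)}_{Pr}$ of $P$ depend smoothly on $1/Pr$ and satisfy $$X_{Pr}^{(\mp)}=-ik\,a_1 \mp c(k) \mp\frac{3\,(\gamma-1)\,k\,a_1\,(k\,a_1\pm i\,c(k))}{4\,c(k)}\frac{1}{Pr}+\mathcal{O}\!\left(\frac{1}{Pr^2}\right),$$ $$X_{Pr}^{(0)}=-i\,\frac{3\,k\,a_1}{2\,Pr}+\mathcal{O}\!\left(\frac{1}{Pr^2}\right).$$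
   Context: This polynomial is the dispersion relation $P(\omega/k)=0$ of the linearized 1D compressible Navier–Stokes equations, where $a_1=2\mu/(3\rho)$ ($\mu$ viscosity, $\rho$ density), $c$ is the adiabatic speed of sound, $\gamma=C_p/C_v$, and $Pr=\mu C_p/\lambda$ is the Prandtl number. In the formula for $X^{(\mp)}_{Pr}$, the upper signs give $X^{(-)}_{Pr}$ and the lower signs give $X^{(+)}_{Pr}$. *)

theory Defs
  imports "HOL-Analysis.Analysis" "HOL-Library.Landau_Symbols"
begin

definition disp_poly :: "real \<Rightarrow> real \<Rightarrow> real \<Rightarrow> real \<Rightarrow> real \<Rightarrow> complex \<Rightarrow> complex" where
  "disp_poly k a1 c \<gamma> Pr X =
     X ^ 3
     + 2 * \<i> * of_real k * of_real a1 * (1 + 3 * of_real \<gamma> / (4 * of_real Pr)) * X ^ 2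
     - (of_real c ^ 2 + 3 * of_real \<gamma> / of_real Pr * of_real a1 ^ 2 * of_real k ^ 2) * X
     - \<i> * (3 * of_real k * of_real a1 * of_real c ^ 2) / (2 * of_real Pr)"

definition smooth_on :: "real set \<Rightarrow> (real \<Rightarrow> complex) \<Rightarrow> bool" where
  "smooth_on S f \<longleftrightarrow> (\<exists>D :: nat \<Rightarrow> real \<Rightarrow> complex. D 0 = f \<and>
     (\<forall>n. \<forall>x\<in>S. (D n has_vector_derivative D (Suc n) x) (at x within S)))"

end

theory Submission
  imports Defs "HOL-Complex_Analysis.Complex_Analysis"
begin

(* At Pr = infinity the polynomial degenerates to the acoustic cubic Q(X) = X (X - X_-) (X - X_+) with
   X_-/+ = -i k a1 -/+ c(k), whose three roots are simple; for finite Pr it is Q + R / Pr with a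
   quadratic thermal correction R. By the holomorphic implicit function theorem each simple root xi
   of Q continues to a holomorphic branch in e = 1/Pr with slope -R(xi) / Q'(xi). The three branches
   stay distinct for small e, hence factor the cubic, and their first-order Taylor expansions give
   the asymptotics. *)

lemma holomorphic_on_tendsto_nhds:
  assumes "f holomorphic_on S" "open S" "z \<in> S"
  shows "(f \<longlongrightarrow> f z) (nhds z)"
  using assms holomorphic_on_imp_continuous_on continuous_on_eq_continuous_at
  by (metis isCont_def tendsto_at_iff_tendsto_nhds)

lemma tendsto_eventually_ne:
  fixes f g :: "'a \<Rightarrow> 'b::real_normed_vector"
  assumes "(f \<longlongrightarrow> a) F" "(g \<longlongrightarrow> b) F" "a \<noteq> b"
  shows "eventually (\<lambda>x. f x \<noteq> g x) F"
  using tendsto_imp_eventually_ne[OF tendsto_diff[OF assms(1,2)], of 0] assms(3) by simp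

lemma holomorphic_root_branch_nonzero:
  fixes Q R :: "complex \<Rightarrow> complex"
  assumes holQ: "Q holomorphic_on S" and holR: "R holomorphic_on S" and S: "open S" "\<xi> \<in> S"
    and Q0: "Q \<xi> = 0" and R0: "R \<xi> \<noteq> 0"
    and dQ: "(Q has_field_derivative q) (at \<xi>)" and q0: "q \<noteq> 0"
  shows "\<exists>\<delta>>0. \<exists>r. r holomorphic_on ball 0 \<delta> \<and> r 0 = \<xi> \<and> deriv r 0 = - R \<xi> / q \<and>
           (\<forall>e\<in>ball 0 \<delta>. Q (r e) + e * R (r e) = 0)"
proof -
  \<comment> \<open>The branch is the local inverse at \<xi> of \<open>g = -Q/R\<close>, which has derivative \<open>-q / R \<xi> \<noteq> 0\<close>.\<close>
  define S0 where "S0 = S \<inter> R -` (- {0})"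
  define g where "g z = - Q z / R z" for z
  have "open S0"
    unfolding S0_def using holR S by (intro continuous_open_preimage holomorphic_on_imp_continuous_on) auto
  have "\<xi> \<in> S0" using R0 S by (simp add: S0_def)
  have holg: "g holomorphic_on S0" unfolding g_def S0_def
    by (intro holomorphic_intros holomorphic_on_subset[OF holQ] holomorphic_on_subset[OF holR]) auto
  have "(R has_field_derivative deriv R \<xi>) (at \<xi>)" using holR S holomorphic_derivI by blast
  from DERIV_divide[OF DERIV_minus[OF dQ] this R0]
  have "(g has_field_derivative - q / R \<xi>) (at \<xi>)" using Q0 R0 by (simp add: g_def [abs_def] field_simps)
  then have dg: "deriv g \<xi> = - q / R \<xi>" by (rule DERIV_imp_deriv)
  then obtain \<rho> where \<rho>: "\<rho> > 0" "ball \<xi> \<rho> \<subseteq> S0" "inj_on g (ball \<xi> \<rho>)"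
    using has_complex_derivative_locally_injective[OF holg \<open>\<xi> \<in> S0\<close> \<open>open S0\<close>] q0 R0 by auto
  have holg\<rho>: "g holomorphic_on ball \<xi> \<rho>" using holg \<rho>(2) holomorphic_on_subset by blast
  obtain h where h: "h holomorphic_on g ` ball \<xi> \<rho>"
     "\<And>z. z \<in> ball \<xi> \<rho> \<Longrightarrow> deriv g z * deriv h (g z) = 1"
     "\<And>z. z \<in> ball \<xi> \<rho> \<Longrightarrow> h (g z) = z"
    using holomorphic_has_inverse[OF holg\<rho> open_ball \<rho>(3)] by blast
  have g\<xi>: "g \<xi> = 0" using Q0 by (simp add: g_def)
  have "open (g ` ball \<xi> \<rho>)" using open_mapping_thm3[OF holg\<rho> open_ball \<rho>(3)] .
  moreover have "0 \<in> g ` ball \<xi> \<rho>" using g\<xi> \<rho>(1) by (metis centre_in_ball imageI)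
  ultimately obtain \<delta> where \<delta>: "\<delta> > 0" "ball 0 \<delta> \<subseteq> g ` ball \<xi> \<rho>"
    using open_contains_ball by blast
  show ?thesis
  proof (intro exI conjI ballI)
    show "h holomorphic_on ball 0 \<delta>" using h(1) \<delta>(2) holomorphic_on_subset by blast
    show "h 0 = \<xi>" using h(3)[of \<xi>] g\<xi> \<rho>(1) by simp
    show "deriv h 0 = - R \<xi> / q" using h(2)[of \<xi>] g\<xi> \<rho>(1) dg q0 R0 by (simp add: field_simps equation_minus_iff)
    fix e :: complex assume "e \<in> ball 0 \<delta>"
    then obtain z where z: "z \<in> ball \<xi> \<rho>" "e = g z" using \<delta>(2) by blast
    then have "h e = z" using h(3) by simp
    have "R z \<noteq> 0" using z(1) \<rho>(2) by (auto simp: S0_def)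
    then have "Q z + e * R z = 0" using z(2) by (simp add: g_def field_simps)
    with \<open>h e = z\<close> show "Q (h e) + e * R (h e) = 0" by simp
  qed (fact \<open>\<delta> > 0\<close>)
qed

lemma holomorphic_root_branch:
  fixes Q R :: "complex \<Rightarrow> complex"
  assumes "Q holomorphic_on S" "R holomorphic_on S" "open S" "\<xi> \<in> S"
    and "Q \<xi> = 0" and "(Q has_field_derivative q) (at \<xi>)" and "q \<noteq> 0"
  shows "\<exists>\<delta>>0. \<exists>r. r holomorphic_on ball 0 \<delta> \<and> r 0 = \<xi> \<and> deriv r 0 = - R \<xi> / q \<and>
           (\<forall>e\<in>ball 0 \<delta>. Q (r e) + e * R (r e) = 0)"
proof (cases "R \<xi> = 0")
  case True
  then have "\<forall>e. Q \<xi> + e * R \<xi> = 0" using assms(5) by simp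
  with True show ?thesis by (intro exI[of _ "1::real"] conjI exI[of _ "\<lambda>_::complex. \<xi>"]) auto
next
  case False
  with assms show ?thesis by (intro holomorphic_root_branch_nonzero)
qed

lemma monic_cubic_eq_prod_distinct_roots:
  fixes p :: "'a::idom \<Rightarrow> 'a"
  assumes p: "\<And>X. p X = X ^ 3 + b * X ^ 2 + c * X + d"
    and "x \<noteq> y" "x \<noteq> z" "y \<noteq> z" and "p x = 0" "p y = 0" "p z = 0"
  shows "p X = (X - x) * (X - y) * (X - z)"
proof -
  have "(x - y) * (x\<^sup>2 + x * y + y\<^sup>2 + b * (x + y) + c) = p x - p y"
    unfolding p by algebra
  then have xy: "x\<^sup>2 + x * y + y\<^sup>2 + b * (x + y) + c = 0"
    using \<open>x \<noteq> y\<close> \<open>p x = 0\<close> \<open>p y = 0\<close> by simp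
  have "(x - z) * (x\<^sup>2 + x * z + z\<^sup>2 + b * (x + z) + c) = p x - p z"
    unfolding p by algebra
  then have xz: "x\<^sup>2 + x * z + z\<^sup>2 + b * (x + z) + c = 0"
    using \<open>x \<noteq> z\<close> \<open>p x = 0\<close> \<open>p z = 0\<close> by simp
  have "(y - z) * (x + y + z + b) = 0" using xy xz by algebra
  then have "x + y + z + b = 0" using \<open>y \<noteq> z\<close> by simp
  then have "b = - (x + y + z)" by algebra
  moreover from this have "c = x * y + x * z + y * z" using xy by algebra
  moreover from calculation have "d = - (x * y * z)" using p[of x] \<open>p x = 0\<close> by algebra
  ultimately show ?thesis unfolding p by algebra
qed

lemma perturbed_cubic_root_branches:
  fixes a b c u v w :: complex and R :: "complex \<Rightarrow> complex"
  assumes "a \<noteq> b" "a \<noteq> c" "b \<noteq> c" and R: "\<And>X. R X = u * X\<^sup>2 + v * X + w"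
  shows "\<exists>\<delta>>0. \<exists>ra rb rc.
     ra holomorphic_on ball 0 \<delta> \<and> rb holomorphic_on ball 0 \<delta> \<and> rc holomorphic_on ball 0 \<delta> \<and>
     ra 0 = a \<and> rb 0 = b \<and> rc 0 = c \<and>
     deriv ra 0 = - R a / ((a - b) * (a - c)) \<and> deriv rb 0 = - R b / ((b - a) * (b - c)) \<and>
     deriv rc 0 = - R c / ((c - a) * (c - b)) \<and>
     (\<forall>e\<in>ball 0 \<delta>. \<forall>X. (X - a) * (X - b) * (X - c) + e * R X = (X - ra e) * (X - rb e) * (X - rc e))"
proof -
  define Q where "Q X = (X - a) * (X - b) * (X - c)" for X
  have holQ: "Q holomorphic_on UNIV" unfolding Q_def by (intro holomorphic_intros)
  have holR: "R holomorphic_on UNIV" unfolding R by (intro holomorphic_intros)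
  have dQ: "(Q has_field_derivative (x - b) * (x - c) + (x - a) * (x - c) + (x - a) * (x - b)) (at x)" for x
    unfolding Q_def by (auto intro!: derivative_eq_intros simp: algebra_simps)
  note branch = holomorphic_root_branch[OF holQ holR open_UNIV UNIV_I _ dQ]
  obtain \<delta>a ra where ra: "\<delta>a > 0" "ra holomorphic_on ball 0 \<delta>a" "ra 0 = a"
      "deriv ra 0 = - R a / ((a - b) * (a - c))" "\<forall>e\<in>ball 0 \<delta>a. Q (ra e) + e * R (ra e) = 0"
    using branch[of a] assms by (auto simp: Q_def)
  obtain \<delta>b rb where rb: "\<delta>b > 0" "rb holomorphic_on ball 0 \<delta>b" "rb 0 = b"
      "deriv rb 0 = - R b / ((b - a) * (b - c))" "\<forall>e\<in>ball 0 \<delta>b. Q (rb e) + e * R (rb e) = 0"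
    using branch[of b] assms by (auto simp: Q_def)
  obtain \<delta>c rc where rc: "\<delta>c > 0" "rc holomorphic_on ball 0 \<delta>c" "rc 0 = c"
      "deriv rc 0 = - R c / ((c - a) * (c - b))" "\<forall>e\<in>ball 0 \<delta>c. Q (rc e) + e * R (rc e) = 0"
    using branch[of c] assms by (auto simp: Q_def)
  have la: "(ra \<longlongrightarrow> a) (nhds 0)" and lb: "(rb \<longlongrightarrow> b) (nhds 0)" and lc: "(rc \<longlongrightarrow> c) (nhds 0)"
    using holomorphic_on_tendsto_nhds[OF _ open_ball centre_in_ball[THEN iffD2]] ra rb rc by auto
  have "\<forall>\<^sub>F e in nhds 0. e \<in> ball 0 \<delta>a \<and> e \<in> ball 0 \<delta>b \<and> e \<in> ball 0 \<delta>c \<and>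
      ra e \<noteq> rb e \<and> ra e \<noteq> rc e \<and> rb e \<noteq> rc e"
    using tendsto_eventually_ne[OF la lb] tendsto_eventually_ne[OF la lc] tendsto_eventually_ne[OF lb lc]
      ra(1) rb(1) rc(1) assms(1-3)
    by (intro eventually_conj eventually_nhds_in_open) auto
  then obtain \<delta> where "\<delta> > 0" and \<delta>: "\<And>e. e \<in> ball 0 \<delta> \<Longrightarrow> e \<in> ball 0 \<delta>a \<and> e \<in> ball 0 \<delta>b \<and>
      e \<in> ball 0 \<delta>c \<and> ra e \<noteq> rb e \<and> ra e \<noteq> rc e \<and> rb e \<noteq> rc e"
    unfolding eventually_nhds_metric by (auto simp: dist_commute)
  have "ra holomorphic_on ball 0 \<delta>" "rb holomorphic_on ball 0 \<delta>" "rc holomorphic_on ball 0 \<delta>"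
    using ra(2) rb(2) rc(2) \<delta> by (meson holomorphic_on_subset subsetI)+
  moreover have "\<forall>e\<in>ball 0 \<delta>. \<forall>X. (X - a) * (X - b) * (X - c) + e * R X = (X - ra e) * (X - rb e) * (X - rc e)"
  proof (intro ballI allI)
    fix e X :: complex assume "e \<in> ball 0 \<delta>"
    note e = \<delta>[OF this]
    show "(X - a) * (X - b) * (X - c) + e * R X = (X - ra e) * (X - rb e) * (X - rc e)"
    proof (rule monic_cubic_eq_prod_distinct_roots[where p = "\<lambda>X. (X - a) * (X - b) * (X - c) + e * R X"])
      show "(Y - a) * (Y - b) * (Y - c) + e * R Y
          = Y ^ 3 + (e * u - (a + b + c)) * Y\<^sup>2 + (a * b + a * c + b * c + e * v) * Y + (e * w - a * b * c)" for Y
        unfolding R by algebra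
    qed (use e ra(5) rb(5) rc(5) in \<open>simp_all add: Q_def\<close>)
  qed
  ultimately show ?thesis using \<open>\<delta> > 0\<close> ra(3,4) rb(3,4) rc(3,4) by blast
qed

lemma holomorphic_first_order_bigo:
  fixes r :: "complex \<Rightarrow> complex"
  assumes hol: "r holomorphic_on S" and S: "open S" "z \<in> S"
  shows "(\<lambda>w. r w - (r z + deriv r z * (w - z))) \<in> O[nhds z](\<lambda>w. (w - z) ^ 2)"
proof -
  \<comment> \<open>Removing the singularity at \<open>z\<close> twice writes the remainder as \<open>(w - z)\<^sup>2 * g2 w\<close>, \<open>g2\<close> holomorphic.\<close>
  define g1 where "g1 w = (if w = z then deriv r z else (r w - r z) / (w - z))" for w
  define g2 where "g2 w = (if w = z then deriv g1 z else (g1 w - g1 z) / (w - z))" for w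
  have "g1 holomorphic_on S" unfolding g1_def using pole_lemma_open[OF hol S(1)] .
  then have "g2 holomorphic_on S" unfolding g2_def using pole_lemma_open S(1) by blast
  then have "(g2 \<longlongrightarrow> g2 z) (nhds z)" using S holomorphic_on_tendsto_nhds by blast
  then have "eventually (\<lambda>w. norm (g2 w) < norm (g2 z) + 1) (nhds z)"
    by (rule order_tendstoD(2)[OF tendsto_norm]) simp
  then have "eventually (\<lambda>w. norm (r w - (r z + deriv r z * (w - z))) \<le> (norm (g2 z) + 1) * norm ((w - z) ^ 2)) (nhds z)"
  proof (rule eventually_mono)
    fix w assume "norm (g2 w) < norm (g2 z) + 1"
    moreover have "r w - (r z + deriv r z * (w - z)) = (w - z) ^ 2 * g2 w"
    proof (cases "w = z")
      case False
      then have "(w - z) ^ 2 * g2 w = (w - z) * ((r w - r z) / (w - z) - deriv r z)"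
        by (simp add: g1_def g2_def power2_eq_square)
      also have "\<dots> = r w - (r z + deriv r z * (w - z))"
        using False by (simp add: field_simps)
      finally show ?thesis by simp
    qed simp
    ultimately show "norm (r w - (r z + deriv r z * (w - z))) \<le> (norm (g2 z) + 1) * norm ((w - z) ^ 2)"
      by (metis norm_mult mult.commute less_imp_le mult_right_mono norm_ge_zero)
  qed
  then show ?thesis by (rule bigoI)
qed

lemma holomorphic_first_order_bigo_at_top:
  fixes r :: "complex \<Rightarrow> complex" and T :: "real \<Rightarrow> complex"
  assumes "r holomorphic_on S" "open S" "0 \<in> S"
    and T: "\<And>x. T x = r 0 + deriv r 0 * of_real (1 / x)"
  shows "(\<lambda>x. r (of_real (1 / x)) - T x) \<in> O[at_top](\<lambda>x. of_real (1 / x ^ 2))"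
proof -
  have "((\<lambda>x::real. 1 / x) \<longlongrightarrow> 0) at_top"
    by (intro tendsto_divide_0[OF tendsto_const] filterlim_at_top_imp_at_infinity filterlim_ident)
  from tendsto_of_real[OF this, where 'a=complex] have "((\<lambda>x. complex_of_real (1 / x)) \<longlongrightarrow> 0) at_top"
    by simp
  from landau_o.big.compose[OF holomorphic_first_order_bigo[OF assms(1-3)] this]
  show ?thesis by (simp add: T power_divide)
qed

lemma smooth_on_holomorphic_of_real:
  fixes r :: "complex \<Rightarrow> complex"
  assumes hol: "r holomorphic_on ball 0 \<delta>"
  shows "smooth_on {-\<delta><..<\<delta>} (\<lambda>x. r (of_real x))"
  unfolding smooth_on_def
proof (intro exI conjI allI ballI)
  show "(\<lambda>n x. (deriv ^^ n) r (complex_of_real x)) 0 = (\<lambda>x. r (of_real x))" by simp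
  fix n :: nat and x :: real assume "x \<in> {-\<delta><..<\<delta>}"
  then have "complex_of_real x \<in> ball 0 \<delta>" by (simp add: abs_less_iff)
  then have "((deriv ^^ n) r has_field_derivative deriv ((deriv ^^ n) r) (of_real x)) (at (of_real x))"
    by (rule holomorphic_derivI[OF holomorphic_higher_deriv[OF hol open_ball] open_ball])
  then show "((\<lambda>x. (deriv ^^ n) r (complex_of_real x)) has_vector_derivative
          (\<lambda>x. (deriv ^^ Suc n) r (complex_of_real x)) x) (at x within {-\<delta><..<\<delta>})"
    using has_vector_derivative_real_field by fastforce
qed

definition thermal_correction :: "complex \<Rightarrow> complex \<Rightarrow> complex \<Rightarrow> complex \<Rightarrow> complex" where
  "thermal_correction K C G X = 3 * G * \<i> * K / 2 * X\<^sup>2 - 3 * G * K\<^sup>2 * X - 3 * \<i> * K * C\<^sup>2 / 2"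

lemma disp_poly_eq_perturbed_cubic:
  assumes "Pr \<noteq> 0" and ck: "ck\<^sup>2 = of_real (c\<^sup>2 - k\<^sup>2 * a1\<^sup>2)"
  defines "K \<equiv> complex_of_real k * of_real a1"
  shows "disp_poly k a1 c \<gamma> Pr X = (X - (- \<i> * K - ck)) * (X - 0) * (X - (- \<i> * K + ck))
           + of_real (1 / Pr) * thermal_correction K (of_real c) (of_real \<gamma>) X"
proof -
  have "ck\<^sup>2 = (of_real c)\<^sup>2 - K\<^sup>2" using ck by (simp add: K_def power_mult_distrib)
  moreover have "\<i>\<^sup>2 = -1" by simp
  ultimately have "(X - (- \<i> * K - ck)) * (X - 0) * (X - (- \<i> * K + ck)) = X ^ 3 + 2 * \<i> * K * X\<^sup>2 - (of_real c)\<^sup>2 * X"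
    by algebra
  moreover have "disp_poly k a1 c \<gamma> Pr X = X ^ 3 + 2 * \<i> * K * X\<^sup>2 - (of_real c)\<^sup>2 * X
      + of_real (1 / Pr) * thermal_correction K (of_real c) (of_real \<gamma>) X"
    using \<open>Pr \<noteq> 0\<close> by (simp add: disp_poly_def thermal_correction_def K_def field_simps)
  ultimately show ?thesis by simp
qed

lemma acoustic_roots_nonzero:
  fixes K C ck :: complex
  assumes "ck\<^sup>2 = C\<^sup>2 - K\<^sup>2" and "C \<noteq> 0"
  shows "ck + \<i> * K \<noteq> 0" and "ck - \<i> * K \<noteq> 0"
proof -
  have "\<i>\<^sup>2 = -1" by simp
  with assms(1) have "(ck + \<i> * K) * (ck - \<i> * K) = C\<^sup>2" by algebra
  with \<open>C \<noteq> 0\<close> show "ck + \<i> * K \<noteq> 0" "ck - \<i> * K \<noteq> 0" by auto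
qed

lemma acoustic_root_slopes:
  fixes K C G ck :: complex
  assumes ck: "ck\<^sup>2 = C\<^sup>2 - K\<^sup>2" and "ck \<noteq> 0" "C \<noteq> 0"
  shows "- thermal_correction K C G (- \<i> * K - ck) / ((- \<i> * K - ck - 0) * (- \<i> * K - ck - (- \<i> * K + ck)))
           = - (3 * (G - 1) * K * (K + \<i> * ck) / (4 * ck))"
    and "- thermal_correction K C G 0 / ((0 - (- \<i> * K - ck)) * (0 - (- \<i> * K + ck))) = - \<i> * 3 * K / 2"
    and "- thermal_correction K C G (- \<i> * K + ck) / ((- \<i> * K + ck - (- \<i> * K - ck)) * (- \<i> * K + ck - 0))
           = 3 * (G - 1) * K * (K - \<i> * ck) / (4 * ck)"
proof -
  have i2: "\<i>\<^sup>2 = -1" by simp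
  have C2: "C\<^sup>2 = (ck + \<i> * K) * (ck - \<i> * K)" using ck i2 by algebra
  note nz = acoustic_roots_nonzero[OF ck \<open>C \<noteq> 0\<close>]
  have num: "thermal_correction K C G (- \<i> * K - ck) = 3 * \<i> * K * (G - 1) / 2 * C\<^sup>2"
    "thermal_correction K C G (- \<i> * K + ck) = 3 * \<i> * K * (G - 1) / 2 * C\<^sup>2"
    unfolding thermal_correction_def using ck i2 by algebra+
  have den: "(- \<i> * K - ck - 0) * (- \<i> * K - ck - (- \<i> * K + ck)) = 2 * ck * (ck + \<i> * K)"
    "(- \<i> * K + ck - (- \<i> * K - ck)) * (- \<i> * K + ck - 0) = 2 * ck * (ck - \<i> * K)"
    "(0 - (- \<i> * K - ck)) * (0 - (- \<i> * K + ck)) = - C\<^sup>2"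
    using ck i2 by algebra+
  show "- thermal_correction K C G (- \<i> * K - ck) / ((- \<i> * K - ck - 0) * (- \<i> * K - ck - (- \<i> * K + ck)))
       = - (3 * (G - 1) * K * (K + \<i> * ck) / (4 * ck))"
    unfolding num den C2 minus_divide_left using nz \<open>ck \<noteq> 0\<close>
    by (subst frac_eq_eq) (simp_all, use i2 in algebra)
  show "- thermal_correction K C G 0 / ((0 - (- \<i> * K - ck)) * (0 - (- \<i> * K + ck))) = - \<i> * 3 * K / 2"
    unfolding den using \<open>C \<noteq> 0\<close> by (simp add: thermal_correction_def field_simps)
  show "- thermal_correction K C G (- \<i> * K + ck) / ((- \<i> * K + ck - (- \<i> * K - ck)) * (- \<i> * K + ck - 0))
       = 3 * (G - 1) * K * (K - \<i> * ck) / (4 * ck)"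
    unfolding num den C2 minus_divide_left using nz \<open>ck \<noteq> 0\<close>
    by (subst frac_eq_eq) (simp_all, use i2 in algebra)
qed

lemma disp_poly_root_branches:
  fixes k a1 c \<gamma> :: real and ck :: complex
  assumes "c > 0" and "c ^ 2 \<noteq> k ^ 2 * a1 ^ 2" and ck: "ck ^ 2 = of_real (c ^ 2 - k ^ 2 * a1 ^ 2)"
  defines "K \<equiv> complex_of_real k * of_real a1" and "G \<equiv> complex_of_real \<gamma>"
  shows "\<exists>\<delta>>0. \<exists>rm r0 rp.
     rm holomorphic_on ball 0 \<delta> \<and> r0 holomorphic_on ball 0 \<delta> \<and> rp holomorphic_on ball 0 \<delta> \<and>
     rm 0 = - \<i> * K - ck \<and> r0 0 = 0 \<and> rp 0 = - \<i> * K + ck \<and>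
     deriv rm 0 = - (3 * (G - 1) * K * (K + \<i> * ck) / (4 * ck)) \<and> deriv r0 0 = - \<i> * 3 * K / 2 \<and>
     deriv rp 0 = 3 * (G - 1) * K * (K - \<i> * ck) / (4 * ck) \<and>
     (\<forall>Pr > 1 / \<delta>. \<forall>X. disp_poly k a1 c \<gamma> Pr X
        = (X - rm (of_real (1 / Pr))) * (X - r0 (of_real (1 / Pr))) * (X - rp (of_real (1 / Pr))))"
proof -
  define C where "C = complex_of_real c"
  have ck2: "ck\<^sup>2 = C\<^sup>2 - K\<^sup>2" using ck by (simp add: K_def C_def power_mult_distrib)
  have "complex_of_real (c ^ 2 - k ^ 2 * a1 ^ 2) \<noteq> 0" using assms(2) by (simp only: of_real_eq_0_iff)
  with ck have "ck \<noteq> 0" by auto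
  have "C \<noteq> 0" using \<open>c > 0\<close> by (simp add: C_def)
  note nz = acoustic_roots_nonzero[OF ck2 this]
  have "- \<i> * K - ck \<noteq> 0" "- \<i> * K + ck \<noteq> 0" "- \<i> * K - ck \<noteq> - \<i> * K + ck"
    using nz \<open>ck \<noteq> 0\<close> by (auto simp: algebra_simps)
  moreover have "thermal_correction K C G X = 3 * G * \<i> * K / 2 * X\<^sup>2 + (- 3 * G * K\<^sup>2) * X + (- 3 * \<i> * K * C\<^sup>2 / 2)"
    for X by (simp add: thermal_correction_def)
  ultimately obtain \<delta> rm r0 rp where "\<delta> > 0"
    and branches: "rm holomorphic_on ball 0 \<delta>" "r0 holomorphic_on ball 0 \<delta>" "rp holomorphic_on ball 0 \<delta>"
      "rm 0 = - \<i> * K - ck" "r0 0 = 0" "rp 0 = - \<i> * K + ck"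
      "deriv rm 0 = - (3 * (G - 1) * K * (K + \<i> * ck) / (4 * ck))"
      "deriv r0 0 = - \<i> * 3 * K / 2" "deriv rp 0 = 3 * (G - 1) * K * (K - \<i> * ck) / (4 * ck)"
    and factor: "\<forall>e\<in>ball 0 \<delta>. \<forall>X. (X - (- \<i> * K - ck)) * (X - 0) * (X - (- \<i> * K + ck))
        + e * thermal_correction K C G X = (X - rm e) * (X - r0 e) * (X - rp e)"
    using perturbed_cubic_root_branches[of "- \<i> * K - ck" 0 "- \<i> * K + ck" "thermal_correction K C G"]
    unfolding acoustic_root_slopes[OF ck2 \<open>ck \<noteq> 0\<close> \<open>C \<noteq> 0\<close>] by metis
  have "\<forall>Pr > 1 / \<delta>. \<forall>X. disp_poly k a1 c \<gamma> Pr X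
      = (X - rm (of_real (1 / Pr))) * (X - r0 (of_real (1 / Pr))) * (X - rp (of_real (1 / Pr)))"
  proof (intro allI impI)
    fix Pr :: real and X :: complex assume "Pr > 1 / \<delta>"
    moreover have "1 / \<delta> > 0" using \<open>\<delta> > 0\<close> by simp
    ultimately have "Pr > 0" by linarith
    with \<open>Pr > 1 / \<delta>\<close> \<open>\<delta> > 0\<close> have "1 / Pr < \<delta>" by (simp add: field_simps mult.commute)
    with \<open>Pr > 0\<close> have "Pr \<noteq> 0" "of_real (1 / Pr) \<in> ball (0 :: complex) \<delta>" by (auto simp: norm_divide)
    then have "disp_poly k a1 c \<gamma> Pr X = (X - (- \<i> * K - ck)) * (X - 0) * (X - (- \<i> * K + ck))
        + of_real (1 / Pr) * thermal_correction K C G X"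
      using disp_poly_eq_perturbed_cubic[OF _ ck] by (simp add: K_def C_def G_def)
    also have "\<dots> = (X - rm (of_real (1 / Pr))) * (X - r0 (of_real (1 / Pr))) * (X - rp (of_real (1 / Pr)))"
      using factor \<open>of_real (1 / Pr) \<in> ball 0 \<delta>\<close> by blast
    finally show "disp_poly k a1 c \<gamma> Pr X
        = (X - rm (of_real (1 / Pr))) * (X - r0 (of_real (1 / Pr))) * (X - rp (of_real (1 / Pr)))" .
  qed
  with \<open>\<delta> > 0\<close> branches show ?thesis by blast
qed

theorem proposition1:
  fixes k a1 c \<gamma> :: real and ck :: complex
  assumes "k \<noteq> 0" and "a1 > 0" and "c > 0" and "\<gamma> \<ge> 1"
    and "c ^ 2 \<noteq> k ^ 2 * a1 ^ 2"
    and "ck ^ 2 = of_real (c ^ 2 - k ^ 2 * a1 ^ 2)"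
  shows "\<exists>\<delta>>0. \<exists>Xm X0 Xp :: real \<Rightarrow> complex.
           smooth_on {-\<delta><..<\<delta>} Xm \<and> smooth_on {-\<delta><..<\<delta>} X0 \<and> smooth_on {-\<delta><..<\<delta>} Xp \<and>
           (\<forall>Pr. Pr > 1 / \<delta> \<longrightarrow>
              (\<forall>X. disp_poly k a1 c \<gamma> Pr X
                     = (X - Xm (1 / Pr)) * (X - X0 (1 / Pr)) * (X - Xp (1 / Pr)))) \<and>
           (\<lambda>Pr. Xm (1 / Pr) - (- \<i> * of_real k * of_real a1 - ck
                 - 3 * (of_real \<gamma> - 1) * of_real k * of_real a1 * (of_real k * of_real a1 + \<i> * ck)
                   / (4 * ck) * of_real (1 / Pr)))
             \<in> O[at_top](\<lambda>Pr. of_real (1 / Pr ^ 2)) \<and>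
           (\<lambda>Pr. Xp (1 / Pr) - (- \<i> * of_real k * of_real a1 + ck
                 + 3 * (of_real \<gamma> - 1) * of_real k * of_real a1 * (of_real k * of_real a1 - \<i> * ck)
                   / (4 * ck) * of_real (1 / Pr)))
             \<in> O[at_top](\<lambda>Pr. of_real (1 / Pr ^ 2)) \<and>
           (\<lambda>Pr. X0 (1 / Pr) - (- \<i> * 3 * of_real k * of_real a1 / (2 * of_real Pr)))
             \<in> O[at_top](\<lambda>Pr. of_real (1 / Pr ^ 2))"
proof -
  obtain \<delta> rm r0 rp where "\<delta> > 0"
    and hol: "rm holomorphic_on ball 0 \<delta>" "r0 holomorphic_on ball 0 \<delta>" "rp holomorphic_on ball 0 \<delta>"
    and at0: "rm 0 = - \<i> * of_real k * of_real a1 - ck" "r0 0 = 0" "rp 0 = - \<i> * of_real k * of_real a1 + ck"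
    and slopes: "deriv rm 0 = - (3 * (of_real \<gamma> - 1) * of_real k * of_real a1 * (of_real k * of_real a1 + \<i> * ck) / (4 * ck))"
      "deriv r0 0 = - \<i> * 3 * of_real k * of_real a1 / 2"
      "deriv rp 0 = 3 * (of_real \<gamma> - 1) * of_real k * of_real a1 * (of_real k * of_real a1 - \<i> * ck) / (4 * ck)"
    and factor: "\<forall>Pr > 1 / \<delta>. \<forall>X. disp_poly k a1 c \<gamma> Pr X
        = (X - rm (of_real (1 / Pr))) * (X - r0 (of_real (1 / Pr))) * (X - rp (of_real (1 / Pr)))"
    using disp_poly_root_branches[OF assms(3,5,6), of \<gamma>] by (auto simp: mult.assoc)
  have "0 \<in> ball (0 :: complex) \<delta>" using \<open>\<delta> > 0\<close> by simp
  note bigo = holomorphic_first_order_bigo_at_top[OF _ open_ball this]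
  show ?thesis
  proof (rule exI[of _ \<delta>], rule conjI[OF \<open>\<delta> > 0\<close>], rule exI[of _ "\<lambda>x. rm (of_real x)"],
      rule exI[of _ "\<lambda>x. r0 (of_real x)"], rule exI[of _ "\<lambda>x. rp (of_real x)"], intro conjI)
    show "(\<lambda>Pr. rm (of_real (1 / Pr)) - (- \<i> * of_real k * of_real a1 - ck
        - 3 * (of_real \<gamma> - 1) * of_real k * of_real a1 * (of_real k * of_real a1 + \<i> * ck)
          / (4 * ck) * of_real (1 / Pr))) \<in> O[at_top](\<lambda>Pr. of_real (1 / Pr ^ 2))"
      by (rule bigo[OF hol(1)]) (simp add: at0 slopes algebra_simps)
    show "(\<lambda>Pr. rp (of_real (1 / Pr)) - (- \<i> * of_real k * of_real a1 + ck
        + 3 * (of_real \<gamma> - 1) * of_real k * of_real a1 * (of_real k * of_real a1 - \<i> * ck)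
          / (4 * ck) * of_real (1 / Pr))) \<in> O[at_top](\<lambda>Pr. of_real (1 / Pr ^ 2))"
      by (rule bigo[OF hol(3)]) (simp add: at0 slopes algebra_simps)
    show "(\<lambda>Pr. r0 (of_real (1 / Pr)) - (- \<i> * 3 * of_real k * of_real a1 / (2 * of_real Pr)))
        \<in> O[at_top](\<lambda>Pr. of_real (1 / Pr ^ 2))"
      by (rule bigo[OF hol(2)]) (simp add: at0 slopes field_simps)
  qed (use hol factor in \<open>simp_all add: smooth_on_holomorphic_of_real\<close>)
qed

end
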